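(* Let $\eta\in\mathbb{C}$, $M\ge 1$, and let $T^\alpha_\beta(u)=\sum_{m=0}^M u^m T^\alpha_{\beta,m}$ ($\alpha,\beta\in\{1,2,3\}$) be operator-valued polynomials acting on a linear space $W$ whose coefficients satisfy, for all $u,v$ and all indices, $$(u-v)T^{\alpha_1}_{\beta_1}(u)T^{\alpha_2}_{\beta_2}(v)+\eta\, T^{\alpha_2}_{\beta_1}(u)T^{\alpha_1}_{\beta_2}(v)=(u-v)T^{\alpha_2}_{\beta_2}(v)T^{\alpha_1}_{\beta_1}(u)+\eta\, T^{\alpha_2}_{\beta_1}(v)T^{\alpha_1}_{\beta_2}(u).$$ Let $U(u)$ be the matrix of quantum minors defined in the context, and for a complex parameter $c$ put $$B_c(u)=T^{2}_{3}(u)\,U^{3}_{1}(u-c)-T^{1}_{3}(u)\,U^{3}_{2}(u-c).$$ Then for every $c$ the operators $B_c(u)$ form a commutative family: $[B_c(u),B_c(v)]=0$ for all $u,v$.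
   Context: For $\alpha_1<\alpha_2$, $\beta_1<\beta_2$ the quantum minor is $T^{\alpha_1\alpha_2}_{\beta_1\beta_2}(u)=T^{\alpha_1}_{\beta_1}(u)T^{\alpha_2}_{\beta_2}(u+\eta)-T^{\alpha_2}_{\beta_1}(u)T^{\alpha_1}_{\beta_2}(u+\eta)$. The $3\times 3$ matrix $U(u)=(U^\alpha_\beta(u))$ is $$U(u)=\begin{pmatrix} T^{23}_{23}(u) & -T^{23}_{13}(u) & T^{23}_{12}(u)\\ -T^{13}_{23}(u) & T^{13}_{13}(u) & -T^{13}_{12}(u)\\ T^{12}_{23}(u) & -T^{12}_{13}(u) & T^{12}_{12}(u)\end{pmatrix},$$ so in particular $U^3_1(u)=T^{12}_{23}(u)$ and $U^3_2(u)=-T^{12}_{13}(u)$. *)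

theory Defs
  imports Complex_Main
begin

text \<open>W is a complex vector space: a type 'w with addition and a complex scalar
multiplication sc satisfying the vector space axioms (locale vector_space).\<close>

definition Tpoly ::
  "(complex \<Rightarrow> 'w \<Rightarrow> 'w::ab_group_add) \<Rightarrow> (nat \<Rightarrow> nat \<Rightarrow> nat \<Rightarrow> 'w \<Rightarrow> 'w) \<Rightarrow> nat
   \<Rightarrow> nat \<Rightarrow> nat \<Rightarrow> complex \<Rightarrow> 'w \<Rightarrow> 'w" where
  "Tpoly sc Tc M a b u = (\<lambda>w. \<Sum>m\<le>M. sc (u ^ m) (Tc a b m w))"

definition qminor ::
  "(complex \<Rightarrow> 'w \<Rightarrow> 'w::ab_group_add) \<Rightarrow> (nat \<Rightarrow> nat \<Rightarrow> nat \<Rightarrow> 'w \<Rightarrow> 'w) \<Rightarrow> nat \<Rightarrow> complex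
   \<Rightarrow> nat \<Rightarrow> nat \<Rightarrow> nat \<Rightarrow> nat \<Rightarrow> complex \<Rightarrow> 'w \<Rightarrow> 'w" where
  "qminor sc Tc M eta a1 a2 b1 b2 u =
     (\<lambda>w. Tpoly sc Tc M a1 b1 u (Tpoly sc Tc M a2 b2 (u + eta) w)
         - Tpoly sc Tc M a2 b1 u (Tpoly sc Tc M a1 b2 (u + eta) w))"

definition U31 where "U31 sc Tc M eta u = qminor sc Tc M eta 1 2 2 3 u"
definition U32 where "U32 sc Tc M eta u = (\<lambda>w. - qminor sc Tc M eta 1 2 1 3 u w)"

definition Bop where
  "Bop sc Tc M eta c u =
     (\<lambda>w. Tpoly sc Tc M 2 3 u (U31 sc Tc M eta (u - c) w)
         - Tpoly sc Tc M 1 3 u (U32 sc Tc M eta (u - c) w))"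

end

theory Submission
  imports Defs
begin

text \<open>Write \<open>X\<^sub>a(u) = T^a_3(u)\<close> and \<open>Y\<^sub>b(u) = U^3_b(u)\<close>, so that
  \<open>B\<^sub>c(u) = X\<^sub>2(u) Y\<^sub>1(u - c) - X\<^sub>1(u) Y\<^sub>2(u - c)\<close>. The RTT relation implies that
  the \<open>X\<^sub>a\<close> satisfy an RTT-type exchange relation with parameter \<open>\<eta>\<close>, that the \<open>Y\<^sub>b\<close>,
  which are quantum minors \<open>T^{12}_{b3}\<close> up to sign and relabelling, satisfy one with
  parameter \<open>-\<eta>\<close>, and that every \<open>X\<^sub>a\<close> commutes with every \<open>Y\<^sub>b\<close>. These quadratic
  relations alone force \<open>[B\<^sub>c(u), B\<^sub>c(v)] = 0\<close>.

  Each identity is proved by an explicit certificate: a list of two-sided multiples of known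
  relations whose sum agrees with the target coefficient by coefficient, as formal linear
  combinations of words in the letters \<open>T^a_b(u)\<close>. The commutation of \<open>X\<^sub>a\<close> with \<open>Y\<^sub>b\<close> comes
  out this way only multiplied by a linear factor in the spectral parameter, which is then
  cancelled because all operators involved are polynomial in it.\<close>

section \<open>Polynomials with vector coefficients\<close>

lemma vector_poly_double_diff:
  fixes scale :: "'a::field \<Rightarrow> 'b::ab_group_add \<Rightarrow> 'b"
  assumes "vector_space scale"
  shows "(\<Sum>m\<le>Suc N. scale ((2 * x) ^ m) (c m)) - scale (2 ^ Suc N) (\<Sum>m\<le>Suc N. scale (x ^ m) (c m))
    = (\<Sum>m\<le>N. scale (x ^ m) (scale (2 ^ m - 2 ^ Suc N) (c m)))"
proof -
  interpret vector_space scale by (fact assms)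
  have "(\<Sum>m\<le>N. scale (x ^ m) (scale (2 ^ m - 2 ^ Suc N) (c m)))
      = (\<Sum>m\<le>Suc N. scale (x ^ m) (scale (2 ^ m - 2 ^ Suc N) (c m)))"
    by simp
  also have "\<dots> = (\<Sum>m\<le>Suc N. scale ((2 * x) ^ m) (c m))
      - scale (2 ^ Suc N) (\<Sum>m\<le>Suc N. scale (x ^ m) (c m))"
    by (simp add: scale_sum_right sum_subtractf[symmetric] power_mult_distrib
        scale_left_diff_distrib scale_right_diff_distrib mult.commute del: sum.atMost_Suc)
  finally show ?thesis ..
qed

lemma vector_poly_coeffs_eq_0:
  fixes scale :: "'a::field_char_0 \<Rightarrow> 'b::ab_group_add \<Rightarrow> 'b"
  assumes "vector_space scale" and "finite S"
    and "\<And>x. x \<notin> S \<Longrightarrow> (\<Sum>m\<le>N. scale (x ^ m) (c m)) = 0"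
  shows "\<forall>m\<le>N. c m = 0"
proof -
  interpret vector_space scale by (fact assms(1))
  show ?thesis
    using assms(2,3)
  proof (induction N arbitrary: c S)
    case 0
    obtain x where "x \<notin> S"
      using ex_new_if_finite[OF infinite_UNIV_char_0 \<open>finite S\<close>] by blast
    with 0 show ?case by auto
  next
    case (Suc N)
    \<comment> \<open>\<open>p(2x) - 2^(N+1) p(x)\<close> has degree \<open>N\<close> and vanishes off \<open>S \<union> S/2\<close>.\<close>
    have double: "(\<Sum>m\<le>N. scale (x ^ m) (scale (2 ^ m - 2 ^ Suc N) (c m))) = 0"
      if x: "x \<notin> S \<union> (\<lambda>s. s / 2) ` S" for x
    proof -
      have "2 * x \<notin> S"
      proof
        assume "2 * x \<in> S"
        then have "x \<in> (\<lambda>s. s / 2) ` S" by (rule image_eqI[rotated]) simp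
        with x show False by simp
      qed
      then have "(\<Sum>m\<le>Suc N. scale ((2 * x) ^ m) (c m)) = 0" by (rule Suc.prems(2))
      moreover have "(\<Sum>m\<le>Suc N. scale (x ^ m) (c m)) = 0" using x by (intro Suc.prems(2)) simp
      ultimately show ?thesis
        by (simp only: vector_poly_double_diff[OF assms(1), symmetric] scale_zero_right diff_zero)
    qed
    have "finite (S \<union> (\<lambda>s. s / 2) ` S)" using Suc.prems(1) by simp
    then have scaled: "\<forall>m\<le>N. scale (2 ^ m - 2 ^ Suc N) (c m) = 0"
      using double by (rule Suc.IH)
    have low: "c m = 0" if "m \<le> N" for m
    proof -
      have "(2::nat) ^ m \<noteq> 2 ^ Suc N"
        using power_strict_increasing[of m "Suc N" "2::nat"] that by auto
      then have "of_nat (2 ^ m) \<noteq> (of_nat (2 ^ Suc N) :: 'a)"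
        by (simp only: of_nat_eq_iff not_False_eq_True)
      then have "(2::'a) ^ m - 2 ^ Suc N \<noteq> 0" by simp
      with scaled that show ?thesis by auto
    qed
    obtain x where x: "x \<notin> insert 0 S"
      using ex_new_if_finite[OF infinite_UNIV_char_0] Suc.prems(1) by blast
    then have "scale (x ^ Suc N) (c (Suc N)) = 0"
      using Suc.prems(2)[of x] low by simp
    with x have "c (Suc N) = 0" by simp
    with low show ?case using le_Suc_eq by auto
  qed
qed

lemma vector_poly_cancel_linear_factor:
  fixes scale :: "'a::field_char_0 \<Rightarrow> 'b::ab_group_add \<Rightarrow> 'b"
  assumes "vector_space scale"
    and "\<And>x. scale (x - r) (\<Sum>m\<le>N. scale (x ^ m) (c m)) = 0"
  shows "(\<Sum>m\<le>N. scale (x ^ m) (c m)) = 0"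
proof -
  interpret vector_space scale by (fact assms(1))
  have "\<forall>m\<le>N. c m = 0"
    by (rule vector_poly_coeffs_eq_0[OF assms(1), of "{r}"]) (use assms(2) in auto)
  then show ?thesis by simp
qed

section \<open>Formal linear combinations of words\<close>

type_synonym ('a, 'l) lincomb = "('a \<times> 'l list) list"

definition lc_pair :: "('l list \<Rightarrow> 'a::comm_ring_1) \<Rightarrow> ('a, 'l) lincomb \<Rightarrow> 'a" where
  "lc_pair y xs = (\<Sum>(c, w)\<leftarrow>xs. c * y w)"

definition lc_smult :: "'a::times \<Rightarrow> ('a, 'l) lincomb \<Rightarrow> ('a, 'l) lincomb" where
  "lc_smult k xs = map (\<lambda>(c, w). (k * c, w)) xs"

lemma lc_pair_append [simp]: "lc_pair y (xs @ ys) = lc_pair y xs + lc_pair y ys"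
  by (simp add: lc_pair_def)

lemma lc_pair_smult [simp]: "lc_pair y (lc_smult k xs) = k * lc_pair y xs"
  by (induction xs) (auto simp: lc_pair_def lc_smult_def algebra_simps)

definition lc_mult :: "('a::times, 'l) lincomb \<Rightarrow> ('a, 'l) lincomb \<Rightarrow> ('a, 'l) lincomb" where
  "lc_mult xs ys = concat (map (\<lambda>(c, v). map (\<lambda>(d, w). (c * d, v @ w)) ys) xs)"

definition lc_commutator :: "('a::ring_1, 'l) lincomb \<Rightarrow> ('a, 'l) lincomb \<Rightarrow> ('a, 'l) lincomb" where
  "lc_commutator xs ys = lc_mult xs ys @ lc_smult (- 1) (lc_mult ys xs)"

definition lc_sandwich ::
  "'l list \<Rightarrow> 'l list \<Rightarrow> 'a::times \<Rightarrow> ('a, 'l) lincomb \<Rightarrow> ('a, 'l) lincomb" where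
  "lc_sandwich L R k xs = map (\<lambda>(c, w). (k * c, L @ w @ R)) xs"

lemmas lc_defs = lc_pair_def lc_smult_def lc_mult_def lc_commutator_def lc_sandwich_def

fun word_act :: "('l \<Rightarrow> 'b \<Rightarrow> 'b) \<Rightarrow> 'l list \<Rightarrow> 'b \<Rightarrow> 'b" where
  "word_act act [] p = p"
| "word_act act (l # w) p = act l (word_act act w p)"

lemma word_act_append: "word_act act (v @ w) p = word_act act v (word_act act w p)"
  by (induction v) auto

locale letter_action = vector_space scale
  for scale :: "'a::field \<Rightarrow> 'b::ab_group_add \<Rightarrow> 'b"
  + fixes act :: "'l \<Rightarrow> 'b \<Rightarrow> 'b"
  assumes linear_act: "Vector_Spaces.linear scale scale (act l)"
begin

sublocale pair: vector_space_pair scale scale ..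

definition lc_eval :: "('a, 'l) lincomb \<Rightarrow> 'b \<Rightarrow> 'b" where
  "lc_eval xs p = (\<Sum>(c, w)\<leftarrow>xs. scale c (word_act act w p))"

lemma linear_word_act: "Vector_Spaces.linear scale scale (word_act act w)"
proof (induction w)
  case Nil
  show ?case using linear_id by (simp add: id_def)
next
  case (Cons l w)
  then show ?case
    using Vector_Spaces.linear_compose[OF _ linear_act] by (simp add: comp_def)
qed

lemma linear_lc_eval: "Vector_Spaces.linear scale scale (lc_eval xs)"
proof (induction xs)
  case Nil
  show ?case using pair.linear_zero by (simp add: lc_eval_def)
next
  case (Cons x xs)
  then show ?case
    using pair.linear_compose_add[OF pair.linear_compose_scale_right[OF linear_word_act]]
    by (cases x) (simp add: lc_eval_def)
qed

lemma lc_eval_Nil [simp]: "lc_eval [] p = 0"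
  and lc_eval_Cons [simp]: "lc_eval ((c, w) # xs) p = scale c (word_act act w p) + lc_eval xs p"
  and lc_eval_append [simp]: "lc_eval (xs @ ys) p = lc_eval xs p + lc_eval ys p"
  by (simp_all add: lc_eval_def)

lemma lc_eval_smult [simp]: "lc_eval (lc_smult k xs) p = scale k (lc_eval xs p)"
  by (induction xs) (auto simp: lc_smult_def scale_right_distrib)

lemma lc_eval_mult [simp]: "lc_eval (lc_mult xs ys) p = lc_eval xs (lc_eval ys p)"
proof (induction xs)
  case Nil
  show ?case by (simp add: lc_mult_def)
next
  case (Cons x xs)
  obtain c v where x: "x = (c, v)" by force
  have "lc_eval (map (\<lambda>(d, w). (c * d, v @ w)) ys) p = scale c (word_act act v (lc_eval ys p))"
    by (induction ys) (auto simp: word_act_append scale_right_distrib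
        pair.linear_0[OF linear_word_act] pair.linear_add[OF linear_word_act]
        pair.linear_scale[OF linear_word_act])
  with Cons show ?case by (simp add: x lc_mult_def)
qed

lemma lc_eval_commutator [simp]:
  "lc_eval (lc_commutator xs ys) p = lc_eval xs (lc_eval ys p) - lc_eval ys (lc_eval xs p)"
  by (simp add: lc_commutator_def)

lemma lc_eval_sandwich:
  "lc_eval (lc_sandwich L R k xs) p = scale k (word_act act L (lc_eval xs (word_act act R p)))"
  by (induction xs) (auto simp: lc_sandwich_def word_act_append scale_right_distrib
      pair.linear_0[OF linear_word_act] pair.linear_add[OF linear_word_act]
      pair.linear_scale[OF linear_word_act])

lemma lc_eval_eq_sum_coeffs:
  assumes "finite W" "snd ` set xs \<subseteq> W"
  shows "lc_eval xs p = (\<Sum>w\<in>W. scale (lc_pair (\<lambda>v. if v = w then 1 else 0) xs) (word_act act w p))"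
  using assms(2)
proof (induction xs)
  case Nil
  show ?case by (simp add: lc_pair_def)
next
  case (Cons x xs)
  obtain c v where x: "x = (c, v)" by force
  with Cons.prems have "v \<in> W" by simp
  have "(\<Sum>w\<in>W. scale (c * (if v = w then 1 else 0)) (word_act act w p))
      = (\<Sum>w\<in>W. if v = w then scale c (word_act act w p) else 0)" (is "?s = _")
    by (rule sum.cong) auto
  also have "\<dots> = scale c (word_act act v p)"
    using \<open>v \<in> W\<close> assms(1) by simp
  finally have "?s = scale c (word_act act v p)" .
  with Cons show ?case
    by (simp add: x lc_pair_def scale_left_distrib sum.distrib)
qed

lemma lc_eval_formally_zero:
  assumes "\<And>y. lc_pair y xs = 0"
  shows "lc_eval xs p = 0"
  using lc_eval_eq_sum_coeffs[of "snd ` set xs" xs p] assms by simp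

lemma lc_eval_zero_by_certificate:
  assumes "\<forall>(L, R, k, F) \<in> set Is. \<forall>v. lc_eval F v = 0"
    and "\<And>y. lc_pair y xs = lc_pair y (concat (map (\<lambda>(L, R, k, F). lc_sandwich L R k F) Is))"
  shows "lc_eval xs p = 0"
proof -
  have "lc_eval (concat (map (\<lambda>(L, R, k, F). lc_sandwich L R k F) Is)) p = 0"
    using assms(1)
    by (induction Is) (auto simp: lc_eval_sandwich pair.linear_0[OF linear_word_act])
  moreover have
    "lc_eval (xs @ lc_smult (- 1) (concat (map (\<lambda>(L, R, k, F). lc_sandwich L R k F) Is))) p = 0"
    by (rule lc_eval_formally_zero) (simp add: assms(2))
  ultimately show ?thesis by simp
qed

end

section \<open>Commuting operators from exchange relations\<close>

lemma commuting_of_exchange_relations: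
  fixes scale :: "'a::field_char_0 \<Rightarrow> 'b::ab_group_add \<Rightarrow> 'b"
    and X Y :: "nat \<Rightarrow> 'a \<Rightarrow> 'b \<Rightarrow> 'b" and eta c :: 'a
  assumes "vector_space scale"
    and linear_X: "\<And>a x. Vector_Spaces.linear scale scale (X a x)"
    and linear_Y: "\<And>b y. Vector_Spaces.linear scale scale (Y b y)"
    and XY: "\<And>a b x y p. a \<in> {i, j} \<Longrightarrow> b \<in> {i, j} \<Longrightarrow>
      X a x (Y b y p) = Y b y (X a x p)"
    and XX: "\<And>a1 a2 x y p. a1 \<in> {i, j} \<Longrightarrow> a2 \<in> {i, j} \<Longrightarrow>
      scale (x - y) (X a1 x (X a2 y p)) + scale eta (X a2 x (X a1 y p))
        = scale (x - y + eta) (X a2 y (X a1 x p))"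
    and YY: "\<And>b1 b2 x y p. b1 \<in> {i, j} \<Longrightarrow> b2 \<in> {i, j} \<Longrightarrow>
      scale (x - y) (Y b1 x (Y b2 y p)) - scale eta (Y b2 x (Y b1 y p))
        = scale (x - y - eta) (Y b2 y (Y b1 x p))"
  defines "B \<equiv> \<lambda>x p. X j x (Y i (x - c) p) - X i x (Y j (x - c) p)"
  shows "B u (B v p) = B v (B u p)"
proof -
  define act where "act = case_sum (case_prod X) (case_prod Y)"
  interpret letter_action scale act
    by (intro letter_action.intro letter_action_axioms.intro assms(1))
      (auto simp: act_def linear_X linear_Y split: sum.split)
  have [simp]: "act (Inl (a, x)) = X a x" "act (Inr (b, y)) = Y b y" for a b x y
    by (simp_all add: act_def)
  define XX_lc :: "nat \<Rightarrow> nat \<Rightarrow> 'a \<Rightarrow> 'a \<Rightarrow> ('a, nat \<times> 'a + nat \<times> 'a) lincomb" where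
    "XX_lc a1 a2 x y = [(x - y, [Inl (a1, x), Inl (a2, y)]), (eta, [Inl (a2, x), Inl (a1, y)]),
      (- (x - y + eta), [Inl (a2, y), Inl (a1, x)])]" for a1 a2 x y
  define YY_lc :: "nat \<Rightarrow> nat \<Rightarrow> 'a \<Rightarrow> 'a \<Rightarrow> ('a, nat \<times> 'a + nat \<times> 'a) lincomb" where
    "YY_lc b1 b2 x y = [(x - y, [Inr (b1, x), Inr (b2, y)]), (- eta, [Inr (b2, x), Inr (b1, y)]),
      (- (x - y - eta), [Inr (b2, y), Inr (b1, x)])]" for b1 b2 x y
  have XX_lc: "lc_eval (XX_lc a1 a2 x y) p = 0" if "a1 \<in> {i, j}" "a2 \<in> {i, j}" for a1 a2 x y p
    using XX[OF that, of x y p] by (simp add: XX_lc_def algebra_simps)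
  have YY_lc: "lc_eval (YY_lc b1 b2 x y) p = 0" if "b1 \<in> {i, j}" "b2 \<in> {i, j}" for b1 b2 x y p
    using YY[OF that, of x y p] by (simp add: YY_lc_def algebra_simps)
  \<comment> \<open>As the \<open>X\<close>'s commute with the \<open>Y\<close>'s, \<open>B(x) B(y)\<close> can be written with all \<open>X\<close>'s
    to the left.\<close>
  define BB_lc :: "'a \<Rightarrow> 'a \<Rightarrow> ('a, nat \<times> 'a + nat \<times> 'a) lincomb" where
    "BB_lc x y = [(1, [Inl (j, x), Inl (j, y), Inr (i, x - c), Inr (i, y - c)]),
      (- 1, [Inl (j, x), Inl (i, y), Inr (i, x - c), Inr (j, y - c)]),
      (- 1, [Inl (i, x), Inl (j, y), Inr (j, x - c), Inr (i, y - c)]),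
      (1, [Inl (i, x), Inl (i, y), Inr (j, x - c), Inr (j, y - c)])]" for x y
  have "B x (B y p) = lc_eval (BB_lc x y) p" for x y
    using XY by (simp add: B_def BB_lc_def pair.linear_diff[OF linear_X] pair.linear_diff[OF linear_Y])
  moreover have "lc_eval (lc_smult (2 * (u - v)) (BB_lc u v @ lc_smult (- 1) (BB_lc v u))) p = 0"
    by (rule lc_eval_zero_by_certificate[where Is = "[
          ([Inl (j, u), Inl (i, v)], [], - 2, YY_lc i j (v - c) (u - c)),
          ([Inl (i, u), Inl (j, v)], [], - 2, YY_lc i j (v - c) (u - c)),
          ([Inl (j, u), Inl (j, v)], [], 1, YY_lc i i (v - c) (u - c)),
          ([Inl (j, u), Inl (j, v)], [], 1, YY_lc i i (u - c) (v - c)),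
          ([], [Inr (i, v - c), Inr (j, u - c)], - 2, XX_lc i j u v),
          ([Inl (j, u), Inl (i, v)], [], - 2, YY_lc i j (u - c) (v - c)),
          ([], [Inr (i, v - c), Inr (i, u - c)], 1, XX_lc j j v u),
          ([], [Inr (i, v - c), Inr (i, u - c)], 1, XX_lc j j u v),
          ([Inl (i, v), Inl (j, u)], [], 2, YY_lc i j (v - c) (u - c)),
          ([Inl (i, u), Inl (i, v)], [], 1, YY_lc j j (v - c) (u - c)),
          ([Inl (i, u), Inl (i, v)], [], 1, YY_lc j j (u - c) (v - c)),
          ([], [Inr (j, v - c), Inr (j, u - c)], 1, XX_lc i i v u),
          ([], [Inr (j, v - c), Inr (j, u - c)], 1, XX_lc i i u v),
          ([], [Inr (i, v - c), Inr (j, u - c)], - 2, XX_lc i j v u),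
          ([], [Inr (j, u - c), Inr (i, v - c)], 2, XX_lc j i u v),
          ([], [Inr (j, v - c), Inr (i, u - c)], - 2, XX_lc j i u v)]"])
      (simp add: XX_lc YY_lc, simp add: lc_defs XX_lc_def YY_lc_def BB_lc_def,
        simp add: algebra_simps)
  ultimately have "scale (2 * (u - v)) (B u (B v p) - B v (B u p)) = 0"
    by simp
  then show ?thesis by auto
qed

section \<open>Consequences of the RTT relation\<close>

type_synonym T_lincomb = "(complex, nat \<times> nat \<times> complex) lincomb"

locale rtt_algebra =
  fixes sc :: "complex \<Rightarrow> 'w::ab_group_add \<Rightarrow> 'w"
    and Tc :: "nat \<Rightarrow> nat \<Rightarrow> nat \<Rightarrow> 'w \<Rightarrow> 'w"
    and M :: nat and eta :: complex
  assumes vector_space: "vector_space sc"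
    and linear_coeff: "\<And>a b m. a \<in> {1,2,3} \<Longrightarrow> b \<in> {1,2,3} \<Longrightarrow> m \<le> M \<Longrightarrow>
                Vector_Spaces.linear sc sc (Tc a b m)"
    and RTT: "\<And>u v a1 a2 b1 b2 w. a1 \<in> {1,2,3} \<Longrightarrow> a2 \<in> {1,2,3} \<Longrightarrow>
                b1 \<in> {1,2,3} \<Longrightarrow> b2 \<in> {1,2,3} \<Longrightarrow>
        sc (u - v) (Tpoly sc Tc M a1 b1 u (Tpoly sc Tc M a2 b2 v w))
      + sc eta (Tpoly sc Tc M a2 b1 u (Tpoly sc Tc M a1 b2 v w))
      = sc (u - v) (Tpoly sc Tc M a2 b2 v (Tpoly sc Tc M a1 b1 u w))
      + sc eta (Tpoly sc Tc M a2 b1 v (Tpoly sc Tc M a1 b2 u w))"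
begin

sublocale vector_space sc
  by (fact vector_space)

sublocale pair: vector_space_pair sc sc ..

abbreviation T :: "nat \<Rightarrow> nat \<Rightarrow> complex \<Rightarrow> 'w \<Rightarrow> 'w" where
  "T a b u \<equiv> Tpoly sc Tc M a b u"

lemma linear_T: "a \<in> {1,2,3} \<Longrightarrow> b \<in> {1,2,3} \<Longrightarrow> Vector_Spaces.linear sc sc (T a b u)"
  unfolding Tpoly_def
  by (intro pair.linear_compose_sum ballI pair.linear_compose_scale_right linear_coeff) auto

text \<open>Letters with an index outside \<open>{1,2,3}\<close> act by zero,
  so that all letters act linearly and the RTT relation holds for arbitrary index values.\<close>

definition T_at :: "nat \<times> nat \<times> complex \<Rightarrow> 'w \<Rightarrow> 'w" where
  "T_at l = (case l of (a, b, u) \<Rightarrow> if a \<in> {1,2,3} \<and> b \<in> {1,2,3} then T a b u else (\<lambda>_. 0))"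

lemma T_at_in_range: "a \<in> {1,2,3} \<Longrightarrow> b \<in> {1,2,3} \<Longrightarrow> T_at (a, b, u) = T a b u"
  and T_at_out_of_range: "a \<notin> {1,2,3} \<or> b \<notin> {1,2,3} \<Longrightarrow> T_at (a, b, u) = (\<lambda>_. 0)"
  by (auto simp: T_at_def)

lemma linear_T_at: "Vector_Spaces.linear sc sc (T_at l)"
  by (auto simp: T_at_def linear_T pair.linear_zero split: prod.split)

sublocale letter_action sc T_at
  by (intro letter_action.intro letter_action_axioms.intro vector_space linear_T_at)

lemma T_commutator_eq_poly:
  assumes "Vector_Spaces.linear sc sc Q"
  shows "T a b x (Q p) - Q (T a b x p) = (\<Sum>m\<le>M. sc (x ^ m) (Tc a b m (Q p) - Q (Tc a b m p)))"
  by (simp add: Tpoly_def pair.linear_sum[OF assms] pair.linear_scale[OF assms]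
      scale_right_diff_distrib sum_subtractf)

lemma T_commute_if_scaled_commute:
  assumes "Vector_Spaces.linear sc sc Q"
    and "\<And>x. sc (x - y) (T a b x (Q p) - Q (T a b x p)) = 0"
  shows "T a b x (Q p) = Q (T a b x p)"
proof -
  have "(\<Sum>m\<le>M. sc (x ^ m) (Tc a b m (Q p) - Q (Tc a b m p))) = 0"
    by (rule vector_poly_cancel_linear_factor[OF vector_space, where r = y])
      (use assms in \<open>simp add: T_commutator_eq_poly\<close>)
  then show ?thesis by (simp add: T_commutator_eq_poly[OF assms(1), symmetric])
qed

definition T_lc :: "nat \<Rightarrow> nat \<Rightarrow> complex \<Rightarrow> T_lincomb" where
  "T_lc a b u = [(1, [(a, b, u)])]"

definition rtt_lc :: "nat \<Rightarrow> nat \<Rightarrow> nat \<Rightarrow> nat \<Rightarrow> complex \<Rightarrow> complex \<Rightarrow> T_lincomb" where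
  "rtt_lc a1 a2 b1 b2 u v =
    [(u - v, [(a1, b1, u), (a2, b2, v)]), (eta, [(a2, b1, u), (a1, b2, v)]),
     (- (u - v), [(a2, b2, v), (a1, b1, u)]), (- eta, [(a2, b1, v), (a1, b2, u)])]"

definition minor_lc :: "nat \<Rightarrow> nat \<Rightarrow> nat \<Rightarrow> nat \<Rightarrow> complex \<Rightarrow> T_lincomb" where
  "minor_lc a1 a2 b1 b2 u =
    [(1, [(a1, b1, u), (a2, b2, u + eta)]), (- 1, [(a2, b1, u), (a1, b2, u + eta)])]"

lemmas rtt_lc_defs = lc_defs T_lc_def rtt_lc_def minor_lc_def

lemma lc_eval_T_lc [simp]: "lc_eval (T_lc a b u) p = T_at (a, b, u) p"
  by (simp add: T_lc_def)

lemma lc_eval_minor_lc: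
  "{a1, a2, b1, b2} \<subseteq> {1,2,3} \<Longrightarrow>
    lc_eval (minor_lc a1 a2 b1 b2 u) p = qminor sc Tc M eta a1 a2 b1 b2 u p"
  by (simp add: minor_lc_def qminor_def T_at_in_range)

lemma lc_eval_rtt_lc [simp]: "lc_eval (rtt_lc a1 a2 b1 b2 u v) p = 0"
proof (cases "{a1, a2, b1, b2} \<subseteq> {1,2,3}")
  case True
  then show ?thesis
    using RTT[of a1 a2 b1 b2 u v p] by (simp add: rtt_lc_def T_at_in_range algebra_simps)
next
  case False
  then show ?thesis by (auto simp: rtt_lc_def T_at_out_of_range pair.linear_0[OF linear_T_at])
qed

lemma scaled_commutator_T_minor_first_column:
  assumes "a \<in> {a1, a2}"
  shows "lc_eval (lc_smult (x - y - eta) (lc_commutator (T_lc a b1 x) (minor_lc a1 a2 b1 b2 y))) p = 0"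
proof -
  from assms consider "a = a1" | "a = a2" by blast
  then show ?thesis
  proof cases
    case 1
    show ?thesis unfolding 1
      by (rule lc_eval_zero_by_certificate[where Is = "[
          ([], [(a1, b2, y + eta)], - 1, rtt_lc a1 a2 b1 b1 x y),
          ([], [(a2, b2, y + eta)], 1, rtt_lc a1 a1 b1 b1 y x),
          ([(a1, b1, y)], [], 1, rtt_lc a1 a2 b1 b2 x (y + eta)),
          ([], [(a1, b2, y + eta)], - 1, rtt_lc a1 a2 b1 b1 y x),
          ([], [(a1, b2, x)], - 1, rtt_lc a1 a2 b1 b1 y (y + eta)),
          ([], [(a1, b2, y + eta)], 1, rtt_lc a2 a1 b1 b1 x y),
          ([(a2, b1, y)], [], - 1, rtt_lc a1 a1 b1 b2 x (y + eta))]"])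
        (simp, simp add: rtt_lc_defs, simp add: algebra_simps)
  next
    case 2
    show ?thesis unfolding 2
      by (rule lc_eval_zero_by_certificate[where Is = "[
          ([], [(a2, b2, y + eta)], - 1, rtt_lc a1 a2 b1 b1 x y),
          ([], [(a2, b2, x)], - 1, rtt_lc a1 a2 b1 b1 y (y + eta)),
          ([(a1, b1, y)], [], - 1, rtt_lc a2 a2 b1 b2 (y + eta) x),
          ([(a1, b1, y)], [], 1, rtt_lc a2 a2 b2 b1 x (y + eta)),
          ([(a1, b1, y)], [], 1, rtt_lc a2 a2 b2 b1 (y + eta) x),
          ([], [(a2, b2, y + eta)], 1, rtt_lc a2 a1 b1 b1 x y),
          ([], [(a2, b2, y + eta)], 1, rtt_lc a2 a1 b1 b1 y x),
          ([], [(a1, b2, y + eta)], - 1, rtt_lc a2 a2 b1 b1 y x),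
          ([(a2, b1, y)], [], - 1, rtt_lc a2 a1 b1 b2 x (y + eta))]"])
        (simp, simp add: rtt_lc_defs, simp add: algebra_simps)
  qed
qed

lemma scaled_commutator_T_minor_second_column:
  assumes "a \<in> {a1, a2}"
  shows "lc_eval (lc_smult (x - y) (lc_commutator (T_lc a b2 x) (minor_lc a1 a2 b1 b2 y))) p = 0"
proof -
  from assms consider "a = a1" | "a = a2" by blast
  then show ?thesis
  proof cases
    case 1
    show ?thesis unfolding 1
      by (rule lc_eval_zero_by_certificate[where Is = "[
          ([], [(a2, b2, y + eta)], - 1, rtt_lc a1 a1 b1 b2 x y),
          ([(a1, b1, x)], [], - 1, rtt_lc a1 a2 b2 b2 y (y + eta)),
          ([(a1, b1, y)], [], - 1, rtt_lc a1 a2 b2 b2 (y + eta) x),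
          ([(a1, b1, y)], [], 1, rtt_lc a2 a1 b2 b2 x (y + eta)),
          ([(a1, b1, y)], [], 1, rtt_lc a2 a1 b2 b2 (y + eta) x),
          ([], [(a2, b2, y + eta)], 1, rtt_lc a1 a1 b2 b1 x y),
          ([], [(a1, b2, y + eta)], - 1, rtt_lc a1 a2 b2 b1 x y),
          ([], [(a2, b2, y + eta)], 1, rtt_lc a1 a1 b2 b1 y x),
          ([], [(a1, b2, y + eta)], - 1, rtt_lc a1 a2 b2 b1 y x),
          ([], [(a1, b2, y + eta)], 1, rtt_lc a2 a1 b1 b2 x y),
          ([(a2, b1, y)], [], - 1, rtt_lc a1 a1 b2 b2 x (y + eta))]"])
        (simp, simp add: rtt_lc_defs, simp add: algebra_simps)
  next
    case 2
    show ?thesis unfolding 2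
      by (rule lc_eval_zero_by_certificate[where Is = "[
          ([], [(a2, b2, y + eta)], 1, rtt_lc a1 a2 b1 b2 y x),
          ([(a1, b1, y)], [], 1, rtt_lc a2 a2 b2 b2 x (y + eta)),
          ([(a2, b1, x)], [], - 1, rtt_lc a1 a2 b2 b2 y (y + eta)),
          ([], [(a1, b2, y + eta)], - 1, rtt_lc a2 a2 b1 b2 y x),
          ([(a2, b1, y)], [], - 1, rtt_lc a2 a1 b2 b2 x (y + eta))]"])
        (simp, simp add: rtt_lc_defs, simp add: algebra_simps)
  qed
qed

lemma T_at_commutes_minor [simp]:
  assumes "a \<in> {a1, a2}" "e \<in> {b1, b2}"
  shows "T_at (a, e, x) (lc_eval (minor_lc a1 a2 b1 b2 y) p)
    = lc_eval (minor_lc a1 a2 b1 b2 y) (T_at (a, e, x) p)"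
proof (cases "a \<in> {1,2,3} \<and> e \<in> {1,2,3}")
  case True
  have "sc (x - (y + (if e = b2 then 0 else eta))) (T a e x (lc_eval (minor_lc a1 a2 b1 b2 y) p)
      - lc_eval (minor_lc a1 a2 b1 b2 y) (T a e x p)) = 0" for x
    using scaled_commutator_T_minor_first_column[OF assms(1), of x y b1 b2 p]
      scaled_commutator_T_minor_second_column[OF assms(1), of x y b2 b1 p]
      assms(2) True
    by (auto simp: T_at_in_range algebra_simps)
  then have "T a e x (lc_eval (minor_lc a1 a2 b1 b2 y) p)
      = lc_eval (minor_lc a1 a2 b1 b2 y) (T a e x p)"
    by (rule T_commute_if_scaled_commute[OF linear_lc_eval])
  with True show ?thesis by (simp add: T_at_in_range)
next
  case False
  then show ?thesis by (auto simp: T_at_out_of_range pair.linear_0[OF linear_lc_eval])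
qed

definition T_minor_exchange_lc ::
  "nat \<Rightarrow> nat \<Rightarrow> nat \<Rightarrow> nat \<Rightarrow> nat \<Rightarrow> nat \<Rightarrow> complex \<Rightarrow> complex \<Rightarrow> T_lincomb" where
  "T_minor_exchange_lc a1 a2 a p q r x y =
      lc_smult (- (x - y)) (lc_mult (T_lc a q x) (minor_lc a1 a2 p r y))
    @ lc_smult (x - y - eta) (lc_mult (minor_lc a1 a2 p r y) (T_lc a q x))
    @ lc_smult eta (lc_mult (T_lc a p x) (minor_lc a1 a2 q r y))
    @ lc_smult eta (lc_mult (minor_lc a1 a2 p q y) (T_lc a r x))"

definition symmetrised_commutator_lc ::
  "nat \<Rightarrow> nat \<Rightarrow> nat \<Rightarrow> nat \<Rightarrow> nat \<Rightarrow> nat \<Rightarrow> complex \<Rightarrow> complex \<Rightarrow> T_lincomb" where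
  "symmetrised_commutator_lc a1 a2 a p q r x y = lc_smult (eta - (x - y))
    (lc_commutator (minor_lc a1 a2 p r y) (T_lc a q x)
      @ lc_commutator (minor_lc a1 a2 q r y) (T_lc a p x))"

lemma lc_eval_T_minor_exchange [simp]:
  assumes "a \<in> {a1, a2}"
  shows "lc_eval (T_minor_exchange_lc a1 a2 a p q r x y) v = 0"
proof -
  from assms consider "a = a1" | "a = a2" by blast
  then show ?thesis
  proof cases
    case 1
    show ?thesis unfolding 1
      by (rule lc_eval_zero_by_certificate[where Is = "[
          ([], [(a2, r, y + eta)], - 1, rtt_lc a1 a1 p q y x),
          ([(a1, p, y)], [], - 1, rtt_lc a1 a2 q r x (y + eta)),
          ([], [(a1, r, y + eta)], 1, rtt_lc a2 a1 p q y x),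
          ([(a2, p, y)], [], 1, rtt_lc a1 a1 q r x (y + eta))]"])
        (simp, simp add: rtt_lc_defs T_minor_exchange_lc_def, simp add: algebra_simps)
  next
    case 2
    show ?thesis unfolding 2
      by (rule lc_eval_zero_by_certificate[where Is = "[
          ([], [(a2, r, y + eta)], - 1, rtt_lc a1 a2 p q y x),
          ([(a1, p, y)], [], - 1, rtt_lc a2 a2 q r x (y + eta)),
          ([], [(a1, r, y + eta)], 1, rtt_lc a2 a2 p q y x),
          ([(a2, p, y)], [], 1, rtt_lc a2 a1 q r x (y + eta))]"])
        (simp, simp add: rtt_lc_defs T_minor_exchange_lc_def, simp add: algebra_simps)
  qed
qed

lemma lc_eval_symmetrised_commutator [simp]:
  assumes "a \<in> {a1, a2}"
  shows "lc_eval (symmetrised_commutator_lc a1 a2 a p q r x y) v = 0"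
proof -
  from assms consider "a = a1" | "a = a2" by blast
  then show ?thesis
  proof cases
    case 1
    show ?thesis unfolding 1
      by (rule lc_eval_zero_by_certificate[where Is = "[
          ([], [(a2, r, y + eta)], 1, rtt_lc a1 a1 p q x y),
          ([], [(a2, r, y + eta)], 2, rtt_lc a1 a1 p q y x),
          ([(a1, p, y)], [], 1, rtt_lc a1 a2 q r x (y + eta)),
          ([], [(a2, r, y + eta)], - 1, rtt_lc a1 a1 q p x y),
          ([(a1, q, y)], [], 1, rtt_lc a1 a2 p r x (y + eta)),
          ([], [(a1, r, y + eta)], - 1, rtt_lc a2 a1 p q y x),
          ([(a2, p, y)], [], - 1, rtt_lc a1 a1 q r x (y + eta)),
          ([], [(a1, r, x)], 1, rtt_lc a2 a1 p q y (y + eta)),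
          ([], [(a1, r, y + eta)], - 1, rtt_lc a2 a1 q p y x),
          ([(a2, q, y)], [], - 1, rtt_lc a1 a1 p r x (y + eta)),
          ([], [(a1, r, x)], 1, rtt_lc a2 a1 q p y (y + eta))]"])
        (simp, simp add: rtt_lc_defs symmetrised_commutator_lc_def, simp add: algebra_simps)
  next
    case 2
    show ?thesis unfolding 2
      by (rule lc_eval_zero_by_certificate[where Is = "[
          ([(a1, p, y)], [], - 1, rtt_lc a2 a2 q r (y + eta) x),
          ([(a1, p, y)], [], 1, rtt_lc a2 a2 r q x (y + eta)),
          ([(a1, p, y)], [], 1, rtt_lc a2 a2 r q (y + eta) x),
          ([], [(a2, r, y)], 1, rtt_lc a1 a2 p q (y + eta) x),
          ([(a1, q, x)], [], 1, rtt_lc a2 a2 p r y (y + eta)),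
          ([(a1, q, x)], [], 1, rtt_lc a2 a2 p r (y + eta) y),
          ([], [(a2, r, y + eta)], 1, rtt_lc a1 a2 q p y x),
          ([(a1, q, y)], [], 1, rtt_lc a2 a2 p r x (y + eta)),
          ([(a1, q, y)], [], - 1, rtt_lc a2 a2 p r (y + eta) x),
          ([(a1, q, y)], [], 1, rtt_lc a2 a2 r p x (y + eta)),
          ([(a1, q, y + eta)], [], 1, rtt_lc a2 a2 p r y x),
          ([(a1, q, y + eta)], [], - 1, rtt_lc a2 a2 r p x y),
          ([], [(a2, p, y + eta)], 1, rtt_lc a1 a2 r q x y),
          ([], [(a2, p, y)], - 1, rtt_lc a1 a2 r q x (y + eta)),
          ([(a2, p, x)], [], 1, rtt_lc a1 a2 q r y (y + eta)),
          ([(a2, p, x)], [], 1, rtt_lc a1 a2 q r (y + eta) y),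
          ([], [(a1, r, y + eta)], 1, rtt_lc a2 a2 p q x y),
          ([(a2, p, y)], [], - 1, rtt_lc a1 a2 r q (y + eta) x),
          ([], [(a1, q, y + eta)], - 1, rtt_lc a2 a2 p r y x),
          ([], [(a1, q, x)], - 1, rtt_lc a2 a2 p r y (y + eta)),
          ([], [(a2, r, x)], - 1, rtt_lc a2 a1 p q (y + eta) y),
          ([(a2, p, y + eta)], [], 1, rtt_lc a1 a2 r q y x),
          ([(a2, p, y + eta)], [], - 1, rtt_lc a2 a1 q r x y),
          ([], [(a1, q, y)], 1, rtt_lc a2 a2 p r (y + eta) x),
          ([], [(a1, q, x)], - 1, rtt_lc a2 a2 p r (y + eta) y),
          ([], [(a2, r, y + eta)], 1, rtt_lc a2 a1 q p x y),
          ([], [(a2, r, y)], - 1, rtt_lc a2 a1 q p x (y + eta)),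
          ([], [(a1, r, y + eta)], - 1, rtt_lc a2 a2 q p x y),
          ([], [(a2, r, x)], 1, rtt_lc a2 a1 q p y (y + eta)),
          ([], [(a2, p, y + eta)], - 1, rtt_lc a2 a1 q r y x),
          ([], [(a1, r, y + eta)], - 2, rtt_lc a2 a2 q p y x),
          ([(a2, q, y)], [], - 1, rtt_lc a2 a1 p r x (y + eta)),
          ([], [(a2, p, y)], 1, rtt_lc a2 a1 q r (y + eta) x),
          ([(a2, r, x)], [], 1, rtt_lc a1 a2 q p y (y + eta)),
          ([(a2, r, x)], [], 1, rtt_lc a1 a2 q p (y + eta) y),
          ([], [(a1, q, y + eta)], 1, rtt_lc a2 a2 r p x y),
          ([], [(a1, q, y)], - 1, rtt_lc a2 a2 r p x (y + eta)),
          ([(a2, r, y)], [], - 1, rtt_lc a1 a2 p q (y + eta) x),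
          ([], [(a2, p, x)], - 1, rtt_lc a2 a1 r q y (y + eta)),
          ([(a2, r, y)], [], 1, rtt_lc a2 a1 q p x (y + eta)),
          ([(a2, r, y + eta)], [], 1, rtt_lc a1 a2 p q y x),
          ([], [(a2, p, x)], - 1, rtt_lc a2 a1 r q (y + eta) y),
          ([(a2, r, y + eta)], [], - 1, rtt_lc a2 a1 q p x y)]"])
        (simp, simp add: rtt_lc_defs symmetrised_commutator_lc_def, simp add: algebra_simps)
  qed
qed

lemma lc_eval_minor_exchange:
  "lc_eval (lc_smult (w - z) (lc_mult (minor_lc a1 a2 p r w) (minor_lc a1 a2 q r z))
    @ lc_smult (- eta) (lc_mult (minor_lc a1 a2 q r w) (minor_lc a1 a2 p r z))
    @ lc_smult (- (w - z - eta)) (lc_mult (minor_lc a1 a2 q r z) (minor_lc a1 a2 p r w))) v = 0"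
  by (rule lc_eval_zero_by_certificate[where Is = "[
          ([], [(a2, r, w), (a1, r, w + eta)], - 1, rtt_lc a2 a1 q p (z + eta) z),
          ([(a1, q, w)], [], - eta, lc_commutator (T_lc a2 r (w + eta)) (minor_lc a1 a2 p r z)),
          ([(a2, q, w)], [], eta, lc_commutator (T_lc a1 r (w + eta)) (minor_lc a1 a2 p r z)),
          ([], [(a2, r, w), (a1, r, w + eta)], 1, rtt_lc a2 a1 p q (z + eta) z),
          ([], [(a2, r, w), (a1, r, w + eta)], 1, rtt_lc a2 a1 p q z (z + eta)),
          ([], [(a1, r, w), (a2, r, w + eta)], - 1, rtt_lc a2 a1 p q z (z + eta)),
          ([(a2, p, z + eta), (a1, q, z)], [], - 1, rtt_lc a1 a2 r r w (w + eta)),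
          ([(a2, q, z + eta), (a1, p, z)], [], 1, rtt_lc a1 a2 r r w (w + eta)),
          ([], [(a1, r, w), (a2, r, w + eta)], - 1, rtt_lc a2 a1 p q (z + eta) z),
          ([], [(a1, r, w), (a2, r, w + eta)], 1, rtt_lc a2 a1 q p (z + eta) z),
          ([(a1, p, w)], [], w - z, lc_commutator (T_lc a2 r (w + eta)) (minor_lc a1 a2 q r z)),
          ([], [(a2, r, w + eta)], 1, T_minor_exchange_lc a1 a2 a1 p q r w z),
          ([(a2, p, w)], [], (- (w - z)), lc_commutator (T_lc a1 r (w + eta)) (minor_lc a1 a2 q r z)),
          ([], [(a1, r, w + eta)], - 1, T_minor_exchange_lc a1 a2 a2 p q r w z),
          ([], [(a2, r, w + eta)], 1, symmetrised_commutator_lc a1 a2 a1 q p r w z),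
          ([], [(a1, r, w + eta)], - 1, symmetrised_commutator_lc a1 a2 a2 p q r w z)]"])
    (simp, simp add: rtt_lc_defs T_minor_exchange_lc_def symmetrised_commutator_lc_def,
      simp add: algebra_simps)

lemma linear_qminor:
  assumes "{a1, a2, b1, b2} \<subseteq> {1,2,3}"
  shows "Vector_Spaces.linear sc sc (qminor sc Tc M eta a1 a2 b1 b2 u)"
proof -
  from assms have "qminor sc Tc M eta a1 a2 b1 b2 u = lc_eval (minor_lc a1 a2 b1 b2 u)"
    by (simp add: fun_eq_iff lc_eval_minor_lc)
  then show ?thesis by (simp only: linear_lc_eval)
qed

lemma T_commutes_qminor:
  assumes "{a1, a2, b1, b2} \<subseteq> {1,2,3}" "a \<in> {a1, a2}" "e \<in> {b1, b2}"
  shows "T a e x (qminor sc Tc M eta a1 a2 b1 b2 y p)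
    = qminor sc Tc M eta a1 a2 b1 b2 y (T a e x p)"
  using T_at_commutes_minor[OF assms(2,3), of x y p] assms
  by (auto simp: lc_eval_minor_lc T_at_in_range)

lemma qminor_exchange:
  assumes "{a1, a2, p, q, r} \<subseteq> {1,2,3}"
  shows "sc (w - z) (qminor sc Tc M eta a1 a2 p r w (qminor sc Tc M eta a1 a2 q r z v))
      - sc eta (qminor sc Tc M eta a1 a2 q r w (qminor sc Tc M eta a1 a2 p r z v))
    = sc (w - z - eta) (qminor sc Tc M eta a1 a2 q r z (qminor sc Tc M eta a1 a2 p r w v))"
  using lc_eval_minor_exchange[of w z a1 a2 p r q v] assms
  by (simp add: lc_eval_minor_lc algebra_simps)

definition U3 :: "nat \<Rightarrow> complex \<Rightarrow> 'w \<Rightarrow> 'w" where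
  "U3 b u = (if b = 1 then U31 sc Tc M eta u else U32 sc Tc M eta u)"

lemma linear_U3: "Vector_Spaces.linear sc sc (U3 b u)"
  using linear_qminor[of 1 2 2 3 u] pair.linear_compose_neg[OF linear_qminor[of 1 2 1 3 u]]
  by (simp add: U3_def U31_def U32_def)

lemma T_commutes_U3:
  assumes "a \<in> {1, 2}" "b \<in> {1, 2}"
  shows "T_at (a, 3, x) (U3 b y p) = U3 b y (T_at (a, 3, x) p)"
  using T_commutes_qminor[of 1 2 2 3 a 3 x y p] T_commutes_qminor[of 1 2 1 3 a 3 x y p] assms
  by (auto simp: U3_def U31_def U32_def T_at_in_range pair.linear_neg[OF linear_T])

lemma T_column3_exchange:
  assumes "a1 \<in> {1, 2}" "a2 \<in> {1, 2}"
  shows "sc (x - y) (T_at (a1, 3, x) (T_at (a2, 3, y) p))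
      + sc eta (T_at (a2, 3, x) (T_at (a1, 3, y) p))
    = sc (x - y + eta) (T_at (a2, 3, y) (T_at (a1, 3, x) p))"
  using RTT[of a1 a2 3 3 x y p] assms by (auto simp: T_at_in_range scale_left_distrib)

lemma U3_exchange:
  assumes "b1 \<in> {1, 2}" "b2 \<in> {1, 2}"
  shows "sc (x - y) (U3 b1 x (U3 b2 y p)) - sc eta (U3 b2 x (U3 b1 y p))
    = sc (x - y - eta) (U3 b2 y (U3 b1 x p))"
  using qminor_exchange[of 1 2 "3 - b1" "3 - b2" 3 x y p] assms
  by (auto simp: U3_def U31_def U32_def pair.linear_neg[OF linear_qminor])
    (simp_all add: algebra_simps)

lemma Bop_eq:
  "Bop sc Tc M eta c u = (\<lambda>p. T_at (2, 3, u) (U3 1 (u - c) p) - T_at (1, 3, u) (U3 2 (u - c) p))"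
  by (simp add: fun_eq_iff Bop_def U3_def T_at_in_range)

lemma Bop_commute:
  "Bop sc Tc M eta c u (Bop sc Tc M eta c v p) = Bop sc Tc M eta c v (Bop sc Tc M eta c u p)"
  unfolding Bop_eq
  by (rule commuting_of_exchange_relations[where X = "\<lambda>a x. T_at (a, 3, x)",
        OF vector_space linear_T_at linear_U3 T_commutes_U3 T_column3_exchange U3_exchange]) auto

end

theorem proposition1:
  fixes sc :: "complex \<Rightarrow> 'w::ab_group_add \<Rightarrow> 'w"
    and Tc :: "nat \<Rightarrow> nat \<Rightarrow> nat \<Rightarrow> 'w \<Rightarrow> 'w"
    and M :: nat and eta :: complex
  assumes vs: "vector_space sc"
    and lin: "\<And>a b m. a \<in> {1,2,3} \<Longrightarrow> b \<in> {1,2,3} \<Longrightarrow> m \<le> M \<Longrightarrow>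
                Vector_Spaces.linear sc sc (Tc a b m)"
    and M1: "M \<ge> 1"
    and RTT: "\<And>u v a1 a2 b1 b2 w. a1 \<in> {1,2,3} \<Longrightarrow> a2 \<in> {1,2,3} \<Longrightarrow>
                b1 \<in> {1,2,3} \<Longrightarrow> b2 \<in> {1,2,3} \<Longrightarrow>
        sc (u - v) (Tpoly sc Tc M a1 b1 u (Tpoly sc Tc M a2 b2 v w))
      + sc eta (Tpoly sc Tc M a2 b1 u (Tpoly sc Tc M a1 b2 v w))
      = sc (u - v) (Tpoly sc Tc M a2 b2 v (Tpoly sc Tc M a1 b1 u w))
      + sc eta (Tpoly sc Tc M a2 b1 v (Tpoly sc Tc M a1 b2 u w))"
  shows "\<forall>c u v. Bop sc Tc M eta c u \<circ> Bop sc Tc M eta c v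
                = Bop sc Tc M eta c v \<circ> Bop sc Tc M eta c u"
proof -
  interpret rtt_algebra sc Tc M eta
    using vs lin RTT by (rule rtt_algebra.intro)
  show ?thesis by (simp add: fun_eq_iff Bop_commute)
qed

end
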